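(* Let $\Lambda$ be a countable index set, $\overline{a},\overline{r}$ sequences of positive reals indexed by $\Lambda$, $t\in(0,2)$, $x^+\in k_t$ and $\alpha>0$. Let $\Lambda_\alpha=\{j\in\Lambda:\overline{a}_j^{-2}\overline{r}_j\alpha<|x^+_j|\}$ and let $P_\alpha:\mathbb{R}^\Lambda\to\mathbb{R}^\Lambda$ be the coordinate projection $(P_\alpha x)_j=x_j$ for $j\in\Lambda_\alpha$ and $(P_\alpha x)_j=0$ otherwise. Then \[\|P_\alpha x\|_{\overline{r},1}\le\|x^+\|_{k_t}^{t/2}\,\alpha^{-t/2}\,\|x\|_{\overline{a},2}\quad\text{for all } x\in\ell^1_{\overline{a}}.\]
   Context: For a sequence $\omega$ of positive reals and $p\in(0,\infty)$, $\|x\|_{\omega,p}=\left(\sum_{j\in\Lambda}\omega_j^p|x_j|^p\right)^{1/p}$ and $\ell^p_\omega=\{x\in\mathbb{R}^\Lambda:\|x\|_{\omega,p}<\infty\}$. For $t\in(0,2)$, $k_t=\{x\in\mathbb{R}^\Lambda:\|x\|_{k_t}<\infty\}$ with $\|x\|_{k_t}=\sup_{\alpha>0}\alpha\left(\sum_{j\in\Lambda}\overline{a}_j^{-2}\overline{r}_j^2\mathbf{1}_{\{\overline{a}_j^{-2}\overline{r}_j\alpha<|x_j|\}}\right)^{1/t}$. *)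

theory Defs
  imports "HOL-Analysis.Analysis"
begin

definition epowr :: "ennreal \<Rightarrow> real \<Rightarrow> ennreal" where
  "epowr s q = (if s = \<infinity> then \<infinity> else ennreal (enn2real s powr q))"

definition wnorm :: "'i set \<Rightarrow> ('i \<Rightarrow> real) \<Rightarrow> real \<Rightarrow> ('i \<Rightarrow> real) \<Rightarrow> ennreal" where
  "wnorm \<Lambda> \<omega> p x = epowr (\<Sum>\<^sub>\<infinity>j\<in>\<Lambda>. ennreal (\<omega> j powr p * \<bar>x j\<bar> powr p)) (1 / p)"

definition ktnorm :: "'i set \<Rightarrow> ('i \<Rightarrow> real) \<Rightarrow> ('i \<Rightarrow> real) \<Rightarrow> real \<Rightarrow> ('i \<Rightarrow> real) \<Rightarrow> ennreal" where
  "ktnorm \<Lambda> a r t x = (SUP \<alpha>\<in>{0<..}. ennreal \<alpha> *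
      epowr (\<Sum>\<^sub>\<infinity>j\<in>\<Lambda>. ennreal (a j powr (-2) * (r j)\<^sup>2 *
                (if a j powr (-2) * r j * \<alpha> < \<bar>x j\<bar> then 1 else 0))) (1 / t))"

definition Lam_alpha :: "'i set \<Rightarrow> ('i \<Rightarrow> real) \<Rightarrow> ('i \<Rightarrow> real) \<Rightarrow> ('i \<Rightarrow> real) \<Rightarrow> real \<Rightarrow> 'i set" where
  "Lam_alpha \<Lambda> a r xp \<alpha> = {j\<in>\<Lambda>. a j powr (-2) * r j * \<alpha> < \<bar>xp j\<bar>}"

definition proj :: "'i set \<Rightarrow> ('i \<Rightarrow> real) \<Rightarrow> ('i \<Rightarrow> real)" where
  "proj S x = (\<lambda>j. if j \<in> S then x j else 0)"

end

theory Submission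
  imports Defs
begin

(* On Lambda_alpha the weights a_j^-2 r_j^2 add up to a number N such that alpha N^(1/t) is one of
   the terms in the supremum defining ||x+||_{k_t}; hence N^(1/2) = (N^(1/t))^(t/2) is at most
   ||x+||_{k_t}^(t/2) alpha^(-t/2). Writing r_j |x_j| = (r_j / a_j) (a_j |x_j|) on Lambda_alpha,
   Cauchy-Schwarz bounds ||P_alpha x||_{r,1} by N^(1/2) ||x||_{a,2}.
   All quantities live in [0, \<infinity>]. *)

lemma epowr_ennreal: "0 \<le> s \<Longrightarrow> epowr (ennreal s) q = ennreal (s powr q)"
  by (simp add: epowr_def)

lemma epowr_1 [simp]: "epowr s 1 = s"
  by (cases s) (auto simp: epowr_def)

lemma epowr_mono:
  assumes "s \<le> s'" "0 \<le> q"
  shows "epowr s q \<le> epowr s' q"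
  using assms by (cases s; cases s') (auto simp: epowr_def top_unique intro!: ennreal_leI powr_mono2)

lemma epowr_epowr: "epowr (epowr s p) q = epowr s (p * q)"
  by (cases s) (auto simp: epowr_def powr_powr)

lemma epowr_mult_ennreal:
  assumes "0 < c"
  shows "epowr (ennreal c * s) q = ennreal (c powr q) * epowr s q"
proof (cases s)
  case (real r)
  with assms show ?thesis
    by (simp add: epowr_ennreal powr_mult flip: ennreal_mult)
qed (use assms in \<open>simp add: epowr_def ennreal_mult_top\<close>)

lemma epowr_le_of_scaled_le:
  assumes "0 < c" "0 \<le> q" "ennreal c * epowr s p \<le> K"
  shows "epowr s (p * q) \<le> epowr K q * ennreal (c powr - q)"
proof -
  have inv: "ennreal (c powr - q) * ennreal (c powr q) = 1"
    using assms(1) by (simp add: powr_minus flip: ennreal_mult)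
  have "ennreal (c powr q) * epowr s (p * q) = epowr (ennreal c * epowr s p) q"
    using assms(1) by (simp add: epowr_mult_ennreal epowr_epowr)
  also have "\<dots> \<le> epowr K q"
    using assms(3,2) by (rule epowr_mono)
  finally have scaled: "ennreal (c powr q) * epowr s (p * q) \<le> epowr K q" .
  have "epowr s (p * q) = ennreal (c powr - q) * (ennreal (c powr q) * epowr s (p * q))"
    by (simp add: inv flip: mult.assoc)
  also have "\<dots> \<le> ennreal (c powr - q) * epowr K q"
    using scaled by (rule mult_left_mono) simp
  finally show ?thesis
    by (simp only: mult.commute)
qed

lemma ennreal_finite_sum_le_infsum:
  fixes f :: "'a \<Rightarrow> ennreal"
  assumes "finite F" "F \<subseteq> A"
  shows "sum f F \<le> infsum f A"
  using assms by (simp add: nonneg_infsum_complete SUP_upper)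

lemma ennreal_L2_set_le:
  assumes "finite F" "F \<subseteq> A"
  shows "ennreal (L2_set f F) \<le> epowr (\<Sum>\<^sub>\<infinity>j\<in>A. ennreal ((f j)\<^sup>2)) (1 / 2)"
proof -
  have "ennreal (L2_set f F) = epowr (\<Sum>j\<in>F. ennreal ((f j)\<^sup>2)) (1 / 2)"
    by (simp add: L2_set_def sum_ennreal epowr_ennreal sum_nonneg powr_half_sqrt)
  also have "\<dots> \<le> epowr (\<Sum>\<^sub>\<infinity>j\<in>A. ennreal ((f j)\<^sup>2)) (1 / 2)"
    using assms by (intro epowr_mono ennreal_finite_sum_le_infsum) auto
  finally show ?thesis .
qed

lemma infsum_ennreal_Cauchy_Schwarz:
  "(\<Sum>\<^sub>\<infinity>j\<in>A. ennreal (f j * g j))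
     \<le> epowr (\<Sum>\<^sub>\<infinity>j\<in>A. ennreal ((f j)\<^sup>2)) (1 / 2) * epowr (\<Sum>\<^sub>\<infinity>j\<in>A. ennreal ((g j)\<^sup>2)) (1 / 2)"
  (is "_ \<le> ?R")
proof -
  have "(\<Sum>j\<in>F. ennreal (f j * g j)) \<le> ?R" if "finite F" "F \<subseteq> A" for F
  proof -
    have "(\<Sum>j\<in>F. ennreal (f j * g j)) \<le> (\<Sum>j\<in>F. ennreal (\<bar>f j\<bar> * \<bar>g j\<bar>))"
      by (intro sum_mono ennreal_leI) (simp flip: abs_mult)
    also have "\<dots> = ennreal (\<Sum>j\<in>F. \<bar>f j\<bar> * \<bar>g j\<bar>)"
      by (simp add: sum_ennreal)
    also have "\<dots> \<le> ennreal (L2_set f F) * ennreal (L2_set g F)"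
      by (simp add: L2_set_mult_ineq ennreal_leI flip: ennreal_mult)
    also have "\<dots> \<le> ?R"
      using that by (intro mult_mono ennreal_L2_set_le) auto
    finally show ?thesis .
  qed
  then show ?thesis
    by (subst nonneg_infsum_complete) (auto intro: SUP_least)
qed

theorem lemma4p1:
  fixes \<Lambda> :: "'i set" and a r xp x :: "'i \<Rightarrow> real" and t \<alpha> :: real
  assumes "countable \<Lambda>"
    and "\<And>j. j \<in> \<Lambda> \<Longrightarrow> a j > 0"
    and "\<And>j. j \<in> \<Lambda> \<Longrightarrow> r j > 0"
    and "0 < t" and "t < 2"
    and "ktnorm \<Lambda> a r t xp < \<infinity>"
    and "\<alpha> > 0"
    and "wnorm \<Lambda> a 1 x < \<infinity>"
  shows "wnorm \<Lambda> r 1 (proj (Lam_alpha \<Lambda> a r xp \<alpha>) x)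
           \<le> epowr (ktnorm \<Lambda> a r t xp) (t / 2) * ennreal (\<alpha> powr (- t / 2)) * wnorm \<Lambda> a 2 x"
proof -
  define S where "S = Lam_alpha \<Lambda> a r xp \<alpha>"
  define f where "f j = r j / a j * of_bool (j \<in> S)" for j
  define g where "g j = a j * \<bar>x j\<bar>" for j
  have weight_split: "r j powr 1 * \<bar>proj S x j\<bar> powr 1 = f j * g j" if "j \<in> \<Lambda>" for j
    using assms(2,3)[OF that] by (simp add: f_def g_def proj_def)
  have f_sq: "a j powr (-2) * (r j)\<^sup>2 * (if a j powr (-2) * r j * \<alpha> < \<bar>xp j\<bar> then 1 else 0) = (f j)\<^sup>2"
    if "j \<in> \<Lambda>" for j
    using assms(2)[OF that] that
    by (simp add: f_def S_def Lam_alpha_def powr_minus power2_eq_square powr_numeral field_simps)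
  have g_sq: "a j powr 2 * \<bar>x j\<bar> powr 2 = (g j)\<^sup>2" if "j \<in> \<Lambda>" for j
    using assms(2)[OF that] by (cases "x j = 0") (simp_all add: g_def powr_numeral power_mult_distrib)
  have "ennreal \<alpha> * epowr (\<Sum>\<^sub>\<infinity>j\<in>\<Lambda>. ennreal ((f j)\<^sup>2)) (1 / t) \<le> ktnorm \<Lambda> a r t xp"
    unfolding ktnorm_def using assms(7) by (intro SUP_upper2[of \<alpha>]) (simp_all add: f_sq cong: infsum_cong)
  from epowr_le_of_scaled_le [OF assms(7) _ this, of "t / 2"]
  have level_bound: "epowr (\<Sum>\<^sub>\<infinity>j\<in>\<Lambda>. ennreal ((f j)\<^sup>2)) (1 / 2)
      \<le> epowr (ktnorm \<Lambda> a r t xp) (t / 2) * ennreal (\<alpha> powr (- t / 2))"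
    using assms(4) by simp
  have "wnorm \<Lambda> r 1 (proj S x) = (\<Sum>\<^sub>\<infinity>j\<in>\<Lambda>. ennreal (f j * g j))"
    unfolding wnorm_def div_by_1 epowr_1 by (simp only: weight_split cong: infsum_cong)
  also have "\<dots> \<le> epowr (\<Sum>\<^sub>\<infinity>j\<in>\<Lambda>. ennreal ((f j)\<^sup>2)) (1 / 2) * epowr (\<Sum>\<^sub>\<infinity>j\<in>\<Lambda>. ennreal ((g j)\<^sup>2)) (1 / 2)"
    by (rule infsum_ennreal_Cauchy_Schwarz)
  also have "\<dots> \<le> epowr (ktnorm \<Lambda> a r t xp) (t / 2) * ennreal (\<alpha> powr (- t / 2))
                 * epowr (\<Sum>\<^sub>\<infinity>j\<in>\<Lambda>. ennreal ((g j)\<^sup>2)) (1 / 2)"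
    using level_bound by (rule mult_right_mono) simp
  also have "epowr (\<Sum>\<^sub>\<infinity>j\<in>\<Lambda>. ennreal ((g j)\<^sup>2)) (1 / 2) = wnorm \<Lambda> a 2 x"
    unfolding wnorm_def by (simp only: g_sq cong: infsum_cong)
  finally show ?thesis
    unfolding S_def .
qed

end
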